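(* Let $T:V\to\mathfrak g$ be an $\mathcal O$-operator on a Lie algebra $\mathfrak g$ with respect to a representation $(V;\rho)$. Then for every $k\ge0$ and every $f\in\mathrm{Hom}(\wedge^kV,\mathfrak g)$, $d_{\bar\rho}f=(-1)^k[\![T,f]\!]$.
   Context: An $\mathcal O$-operator: linear $T:V\to\mathfrak g$ with $[Tu,Tv]=T(\rho(Tu)(v)-\rho(Tv)(u))$. Set $[u,v]_T=\rho(Tu)(v)-\rho(Tv)(u)$ (a Lie bracket on $V$) and $\bar\rho(u)(x)=[Tu,x]+T\rho(x)(u)$, a representation of $(V,[\cdot,\cdot]_T)$ on $\mathfrak g$. $d_{\bar\rho}:\mathrm{Hom}(\wedge^kV,\mathfrak g)\to\mathrm{Hom}(\wedge^{k+1}V,\mathfrak g)$ is the Chevalley–Eilenberg coboundary: $d_{\bar\rho}f(u_1,\dots,u_{k+1})=\sum_{i}(-1)^{i+1}[Tu_i,f(u_1,\dots,\hat u_i,\dots,u_{k+1})]+\sum_i(-1)^{i+1}T\rho(f(u_1,\dots,\hat u_i,\dots,u_{k+1}))(u_i)+\sum_{i<j}(-1)^{i+j}f([u_i,u_j]_T,u_1,\dots,\hat u_i,\dots,\hat u_j,\dots,u_{k+1})$. The bracket $[\![\cdot,\cdot]\!]$ on $\bigoplus_k\mathrm{Hom}(\wedge^kV,\mathfrak g)$ is $[\![P,Q]\!](u_1,\dots,u_{m+n})=\sum_{\sigma\in\mathbb S_{(m,1,n-1)}}(-1)^{\sigma}P(\rho(Q(u_{\sigma(1)},\dots,u_{\sigma(m)}))u_{\sigma(m+1)},u_{\sigma(m+2)},\dots,u_{\sigma(m+n)})-(-1)^{mn}\sum_{\sigma\in\mathbb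 S_{(n,1,m-1)}}(-1)^{\sigma}Q(\rho(P(u_{\sigma(1)},\dots,u_{\sigma(n)}))u_{\sigma(n+1)},u_{\sigma(n+2)},\dots,u_{\sigma(m+n)})+(-1)^{mn}\sum_{\sigma\in\mathbb S_{(n,m)}}(-1)^{\sigma}[P(u_{\sigma(1)},\dots,u_{\sigma(n)}),Q(u_{\sigma(n+1)},\dots,u_{\sigma(m+n)})]$ for $P\in\mathrm{Hom}(\wedge^nV,\mathfrak g)$, $Q\in\mathrm{Hom}(\wedge^mV,\mathfrak g)$, where $\mathbb S_{(i_1,\dots,i_k)}$ denotes unshuffles (permutations increasing on consecutive blocks of the given sizes). *)

theory Defs
  imports Main "HOL.Vector_Spaces" "HOL-Combinatorics.Permutations"
begin

definition lie_algebra :: "('k::field \<Rightarrow> 'g::ab_group_add \<Rightarrow> 'g) \<Rightarrow> ('g \<Rightarrow> 'g \<Rightarrow> 'g) \<Rightarrow> bool" where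
  "lie_algebra sc br \<longleftrightarrow> vector_space sc
     \<and> (\<forall>x. Vector_Spaces.linear sc sc (br x))
     \<and> (\<forall>y. Vector_Spaces.linear sc sc (\<lambda>x. br x y))
     \<and> (\<forall>x. br x x = 0)
     \<and> (\<forall>x y z. br x (br y z) + br y (br z x) + br z (br x y) = 0)"

definition lie_representation ::
  "('k::field \<Rightarrow> 'g::ab_group_add \<Rightarrow> 'g) \<Rightarrow> ('g \<Rightarrow> 'g \<Rightarrow> 'g) \<Rightarrow>
   ('k \<Rightarrow> 'v::ab_group_add \<Rightarrow> 'v) \<Rightarrow> ('g \<Rightarrow> 'v \<Rightarrow> 'v) \<Rightarrow> bool" where
  "lie_representation scg br scv rho \<longleftrightarrow> vector_space scv
     \<and> (\<forall>x. Vector_Spaces.linear scv scv (rho x))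
     \<and> (\<forall>v. Vector_Spaces.linear scg scv (\<lambda>x. rho x v))
     \<and> (\<forall>x y v. rho (br x y) v = rho x (rho y v) - rho y (rho x v))"

definition O_operator ::
  "('k::field \<Rightarrow> 'g::ab_group_add \<Rightarrow> 'g) \<Rightarrow> ('g \<Rightarrow> 'g \<Rightarrow> 'g) \<Rightarrow>
   ('k \<Rightarrow> 'v::ab_group_add \<Rightarrow> 'v) \<Rightarrow> ('g \<Rightarrow> 'v \<Rightarrow> 'v) \<Rightarrow> ('v \<Rightarrow> 'g) \<Rightarrow> bool" where
  "O_operator scg br scv rho T \<longleftrightarrow> Vector_Spaces.linear scv scg T
     \<and> (\<forall>u v. br (T u) (T v) = T (rho (T u) v - rho (T v) u))"

text \<open>Elements of Hom(wedge^k V, g): maps on lists of length k that are multilinear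
  and alternating (values on lists of other lengths are irrelevant).\<close>

definition alt_cochain ::
  "('k::field \<Rightarrow> 'v::ab_group_add \<Rightarrow> 'v) \<Rightarrow> ('k \<Rightarrow> 'g::ab_group_add \<Rightarrow> 'g) \<Rightarrow> nat \<Rightarrow> ('v list \<Rightarrow> 'g) \<Rightarrow> bool" where
  "alt_cochain scv scg k f \<longleftrightarrow>
     (\<forall>us i. length us = k \<and> i < k \<longrightarrow> Vector_Spaces.linear scv scg (\<lambda>x. f (us[i := x])))
   \<and> (\<forall>us i j. length us = k \<and> i < j \<and> j < k \<and> us ! i = us ! j \<longrightarrow> f us = 0)"

definition T_bracket :: "('g \<Rightarrow> 'v \<Rightarrow> 'v::ab_group_add) \<Rightarrow> ('v \<Rightarrow> 'g) \<Rightarrow> 'v \<Rightarrow> 'v \<Rightarrow> 'v" where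
  "T_bracket rho T u v = rho (T u) v - rho (T v) u"

definition del :: "nat \<Rightarrow> 'a list \<Rightarrow> 'a list" where
  "del i xs = take i xs @ drop (Suc i) xs"

text \<open>Chevalley-Eilenberg coboundary d_{rho-bar} of f (a k-cochain), evaluated on a list of
  k+1 vectors; indices are 0-based, so (-1)^(i+1) becomes (-1)^i and (-1)^(i+j) is unchanged.\<close>
definition d_bar ::
  "('k::field \<Rightarrow> 'g::ab_group_add \<Rightarrow> 'g) \<Rightarrow> ('g \<Rightarrow> 'g \<Rightarrow> 'g) \<Rightarrow> ('g \<Rightarrow> 'v::ab_group_add \<Rightarrow> 'v)
   \<Rightarrow> ('v \<Rightarrow> 'g) \<Rightarrow> nat \<Rightarrow> ('v list \<Rightarrow> 'g) \<Rightarrow> 'v list \<Rightarrow> 'g" where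
  "d_bar scg br rho T k f us =
     (\<Sum>i<Suc k. scg ((-1) ^ i) (br (T (us ! i)) (f (del i us))))
   + (\<Sum>i<Suc k. scg ((-1) ^ i) (T (rho (f (del i us)) (us ! i))))
   + (\<Sum>j<Suc k. \<Sum>i<j. scg ((-1) ^ (i + j))
        (f (T_bracket rho T (us ! i) (us ! j) # del i (del j us))))"

definition unshuffles :: "nat list \<Rightarrow> (nat \<Rightarrow> nat) set" where
  "unshuffles bs = {\<sigma>. \<sigma> permutes {..<sum_list bs} \<and>
     (\<forall>b<length bs. \<forall>i j. sum_list (take b bs) \<le> i \<and> i < j \<and> j < sum_list (take (Suc b) bs)
        \<longrightarrow> \<sigma> i < \<sigma> j)}"

definition seg :: "'a list \<Rightarrow> (nat \<Rightarrow> nat) \<Rightarrow> nat \<Rightarrow> nat \<Rightarrow> 'a list" where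
  "seg us \<sigma> a b = map (\<lambda>i. us ! \<sigma> i) [a..<b]"

text \<open>A sum over unshuffles with a block of size -1 (i.e. the first sum when n=0,
  the second when m=0) is empty and taken to be 0.\<close>
definition bbracket ::
  "('k::field \<Rightarrow> 'g::ab_group_add \<Rightarrow> 'g) \<Rightarrow> ('g \<Rightarrow> 'g \<Rightarrow> 'g) \<Rightarrow> ('g \<Rightarrow> 'v \<Rightarrow> 'v)
   \<Rightarrow> nat \<Rightarrow> ('v list \<Rightarrow> 'g) \<Rightarrow> nat \<Rightarrow> ('v list \<Rightarrow> 'g) \<Rightarrow> 'v list \<Rightarrow> 'g" where
  "bbracket scg br rho n P m Q us =
     (if n = 0 then 0 else
       (\<Sum>\<sigma>\<in>unshuffles [m, 1, n - 1]. scg (of_int (sign \<sigma>))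
          (P (rho (Q (seg us \<sigma> 0 m)) (us ! \<sigma> m) # seg us \<sigma> (m + 1) (m + n)))))
   - scg ((-1) ^ (m * n))
     (if m = 0 then 0 else
       (\<Sum>\<sigma>\<in>unshuffles [n, 1, m - 1]. scg (of_int (sign \<sigma>))
          (Q (rho (P (seg us \<sigma> 0 n)) (us ! \<sigma> n) # seg us \<sigma> (n + 1) (m + n)))))
   + scg ((-1) ^ (m * n))
       (\<Sum>\<sigma>\<in>unshuffles [n, m]. scg (of_int (sign \<sigma>))
          (br (P (seg us \<sigma> 0 n)) (Q (seg us \<sigma> n (m + n)))))"

end

theory Submission
  imports Defs
begin

(* Both sides are signed sums over the same data, so the identity is a reindexing. Of the three
   unshuffle sums in [[T,f]], the one over S(k,1,0) is indexed by the argument u_i placed in the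
   last slot, the one over S(1,k) by the argument placed first, and the one over S(1,1,k-1) by the
   ordered pair of arguments placed first; in each case the remaining arguments keep their order.
   Evaluating the signs of these unshuffles turns the three sums into the three sums of d f, where
   the pair sum needs linearity of f in its first argument to combine the two orderings of a pair
   into one bracket [u_i,u_j]_T. *)

section \<open>Permutations moving one argument\<close>

(* An unshuffle sigma reads the arguments in the order u_(sigma 0), u_(sigma 1), ... (see seg):
   bring_forward a i moves u_(a+i) to slot a, send_back a m moves u_a to slot a+m. *)
definition bring_forward :: "nat \<Rightarrow> nat \<Rightarrow> nat \<Rightarrow> nat" where
  "bring_forward a i p = (if p = a then a + i else if a < p \<and> p \<le> a + i then p - 1 else p)"

definition send_back :: "nat \<Rightarrow> nat \<Rightarrow> nat \<Rightarrow> nat" where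
  "send_back a m p = (if a \<le> p \<and> p < a + m then p + 1 else if p = a + m then a else p)"

lemma send_back_apply:
  "i \<le> k \<Longrightarrow>
     send_back i (k - i) p = (if i \<le> p \<and> p < k then p + 1 else if p = k then i else p)"
  by (auto simp: send_back_def)

lemma bring_forward_0_apply:
  "bring_forward 0 i p = (if p = 0 then i else if p \<le> i then p - 1 else p)"
  by (auto simp: bring_forward_def)

lemma bring_forward_0 [simp]: "bring_forward a 0 = id"
  by (rule ext) (simp add: bring_forward_def)

lemma bring_forward_Suc:
  "bring_forward a (Suc i) = transpose (a + i) (a + i + 1) \<circ> bring_forward a i"
  by (rule ext) (auto simp: bring_forward_def transpose_def)

lemma send_back_0 [simp]: "send_back a 0 = id"
  by (rule ext) (simp add: send_back_def)

lemma send_back_Suc: "send_back a (Suc m) = transpose a (a + 1) \<circ> send_back (a + 1) m"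
  by (rule ext) (auto simp: send_back_def transpose_def)

lemma permutes_bring_forward: "bring_forward a i permutes {a..a + i}"
proof (induction i)
  case (Suc i)
  then have "bring_forward a i permutes {a..a + Suc i}"
    by (rule permutes_subset) auto
  moreover have "transpose (a + i) (a + i + 1) permutes {a..a + Suc i}"
    by (rule permutes_swap_id) auto
  ultimately show ?case
    unfolding bring_forward_Suc by (rule permutes_compose)
qed (simp only: bring_forward_0 permutes_id)

lemma permutation_bring_forward: "permutation (bring_forward a i)"
  by (rule permutes_imp_permutation[OF finite_atLeastAtMost permutes_bring_forward])

lemma sign_bring_forward: "sign (bring_forward a i) = (-1) ^ i"
proof (induction i)
  case (Suc i)
  show ?case
    unfolding bring_forward_Suc sign_compose[OF permutation_swap_id permutation_bring_forward]
    by (simp add: sign_swap_id Suc.IH)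
qed (simp add: sign_id)

lemma permutes_send_back: "send_back a m permutes {a..a + m}"
proof (induction m arbitrary: a)
  case (Suc m)
  have "send_back (a + 1) m permutes {a..a + Suc m}"
    using Suc.IH by (rule permutes_subset) auto
  moreover have "transpose a (a + 1) permutes {a..a + Suc m}"
    by (rule permutes_swap_id) auto
  ultimately show ?case
    unfolding send_back_Suc by (rule permutes_compose)
qed (simp only: send_back_0 permutes_id)

lemma permutation_send_back: "permutation (send_back a m)"
  by (rule permutes_imp_permutation[OF finite_atLeastAtMost permutes_send_back])

lemma sign_send_back: "sign (send_back a m) = (-1) ^ m"
proof (induction m arbitrary: a)
  case (Suc m)
  show ?case
    unfolding send_back_Suc sign_compose[OF permutation_swap_id permutation_send_back]
    by (simp add: sign_swap_id Suc.IH)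
qed (simp add: sign_id)

section \<open>Reindexing sums over unshuffles\<close>

lemma mem_unshuffles_two_blocks:
  "\<sigma> \<in> unshuffles [a, b] \<longleftrightarrow>
     \<sigma> permutes {..<a + b} \<and> strict_mono_on {..<a} \<sigma> \<and> strict_mono_on {a..<a + b} \<sigma>"
  unfolding unshuffles_def strict_mono_on_def by (auto simp: less_Suc_eq)

lemma mem_unshuffles_three_blocks:
  "\<sigma> \<in> unshuffles [a, b, c] \<longleftrightarrow>
     \<sigma> permutes {..<a + b + c} \<and> strict_mono_on {..<a} \<sigma> \<and> strict_mono_on {a..<a + b} \<sigma>
     \<and> strict_mono_on {a + b..<a + b + c} \<sigma>"
  unfolding unshuffles_def strict_mono_on_def by (auto simp: less_Suc_eq add.assoc)

lemma permutes_eq_if_strict_mono_on_block: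
  fixes \<sigma> \<tau> :: "nat \<Rightarrow> nat"
  assumes \<sigma>: "\<sigma> permutes S" and \<tau>: "\<tau> permutes S" and block: "{a..<b} \<subseteq> S"
    and mono: "strict_mono_on {a..<b} \<sigma>" "strict_mono_on {a..<b} \<tau>"
    and agree: "\<And>p. p \<in> S - {a..<b} \<Longrightarrow> \<sigma> p = \<tau> p"
  shows "\<sigma> = \<tau>"
proof
  fix p
  have image_block: "\<pi> ` {a..<b} = S - \<pi> ` (S - {a..<b})" if "\<pi> permutes S" for \<pi>
    using that block
    by (metis Diff_Diff_Int Diff_subset image_set_diff inf.absorb_iff2 permutes_image permutes_inj)
  have "\<sigma> ` (S - {a..<b}) = \<tau> ` (S - {a..<b})"
    using agree by (rule image_cong[OF refl])
  then have "\<sigma> ` {a..<b} = \<tau> ` {a..<b}"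
    using image_block[OF \<sigma>] image_block[OF \<tau>] by simp
  moreover have "sorted (map \<pi> [a..<b]) \<and> distinct (map \<pi> [a..<b])"
    if "strict_mono_on {a..<b} \<pi>" for \<pi>
  proof -
    have "sorted_wrt (<) (map \<pi> [a..<b])"
      unfolding sorted_wrt_map
      by (rule sorted_wrt_mono_rel[OF _ sorted_wrt_upt]) (simp add: strict_mono_onD[OF that])
    then show ?thesis
      by (simp add: strict_sorted_iff)
  qed
  ultimately have "map \<sigma> [a..<b] = map \<tau> [a..<b]"
    using mono by (intro sorted_distinct_set_unique) auto
  then show "\<sigma> p = \<tau> p"
    using agree permutes_not_in[OF \<sigma>] permutes_not_in[OF \<tau>] block
    by (cases "p \<in> {a..<b}"; cases "p \<in> S") auto
qed

lemma sum_unshuffles_send_back: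
  "(\<Sum>\<sigma>\<in>unshuffles [k, 1, 0]. F \<sigma>) = (\<Sum>i<Suc k. F (send_back i (k - i)))"
proof -
  have "bij_betw (\<lambda>i. send_back i (k - i)) {..<Suc k} (unshuffles [k, 1, 0])"
  proof (rule bij_betwI')
    fix i i' assume "i \<in> {..<Suc k}" "i' \<in> {..<Suc k}"
    then have "send_back i (k - i) k = i" "send_back i' (k - i') k = i'"
      by (simp_all add: send_back_apply)
    then show "send_back i (k - i) = send_back i' (k - i') \<longleftrightarrow> i = i'"
      by metis
  next
    fix i assume i: "i \<in> {..<Suc k}"
    have "send_back i (k - i) permutes {..<Suc k}"
      using i by (intro permutes_subset[OF permutes_send_back]) auto
    then show "send_back i (k - i) \<in> unshuffles [k, 1, 0]"
      using i by (simp add: mem_unshuffles_three_blocks strict_mono_on_def send_back_apply)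
  next
    fix \<sigma> assume "\<sigma> \<in> unshuffles [k, 1, 0]"
    then have \<sigma>: "\<sigma> permutes {..<Suc k}" "strict_mono_on {0..<k} \<sigma>"
      by (simp_all add: mem_unshuffles_three_blocks atLeast0LessThan)
    have ik: "\<sigma> k \<le> k"
      using permutes_in_image[OF \<sigma>(1), of k] by simp
    have "\<sigma> = send_back (\<sigma> k) (k - \<sigma> k)"
    proof (rule permutes_eq_if_strict_mono_on_block[OF \<sigma>(1) _ _ \<sigma>(2)])
      show "send_back (\<sigma> k) (k - \<sigma> k) permutes {..<Suc k}"
        using ik by (intro permutes_subset[OF permutes_send_back]) auto
    qed (auto simp: strict_mono_on_def send_back_apply[OF ik] less_Suc_eq)
    then show "\<exists>i\<in>{..<Suc k}. \<sigma> = send_back i (k - i)"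
      using ik by auto
  qed
  then show ?thesis
    by (rule sum.reindex_bij_betw[symmetric])
qed

lemma sum_unshuffles_bring_forward:
  "(\<Sum>\<sigma>\<in>unshuffles [1, k]. F \<sigma>) = (\<Sum>i<Suc k. F (bring_forward 0 i))"
proof -
  have "bij_betw (bring_forward 0) {..<Suc k} (unshuffles [1, k])"
  proof (rule bij_betwI')
    fix i i' :: nat
    have "bring_forward 0 i 0 = i" "bring_forward 0 i' 0 = i'"
      by (simp_all add: bring_forward_0_apply)
    then show "bring_forward 0 i = bring_forward 0 i' \<longleftrightarrow> i = i'"
      by metis
  next
    fix i assume i: "i \<in> {..<Suc k}"
    have "bring_forward 0 i permutes {..<Suc k}"
      using i by (intro permutes_subset[OF permutes_bring_forward]) auto
    then show "bring_forward 0 i \<in> unshuffles [1, k]"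
      by (auto simp: mem_unshuffles_two_blocks strict_mono_on_def bring_forward_0_apply)
  next
    fix \<sigma> assume "\<sigma> \<in> unshuffles [1, k]"
    then have \<sigma>: "\<sigma> permutes {..<Suc k}" "strict_mono_on {1..<Suc k} \<sigma>"
      by (simp_all add: mem_unshuffles_two_blocks)
    have ik: "\<sigma> 0 \<le> k"
      using permutes_in_image[OF \<sigma>(1), of 0] by simp
    have "\<sigma> = bring_forward 0 (\<sigma> 0)"
    proof (rule permutes_eq_if_strict_mono_on_block[OF \<sigma>(1) _ _ \<sigma>(2)])
      show "bring_forward 0 (\<sigma> 0) permutes {..<Suc k}"
        using ik by (intro permutes_subset[OF permutes_bring_forward]) auto
    qed (auto simp: strict_mono_on_def bring_forward_0_apply)
    then show "\<exists>i\<in>{..<Suc k}. \<sigma> = bring_forward 0 i"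
      using ik by auto
  qed
  then show ?thesis
    by (rule sum.reindex_bij_betw[symmetric])
qed

definition bring_two_forward :: "nat \<Rightarrow> nat \<Rightarrow> nat \<Rightarrow> nat" where
  "bring_two_forward i j = bring_forward 0 i \<circ> bring_forward 1 (j - 1)"

lemma bring_two_forward_apply:
  "i < j \<Longrightarrow> bring_two_forward i j p =
     (if p = 0 then i else if p = 1 then j else if p \<le> i + 1 then p - 2 else if p \<le> j then p - 1 else p)"
  by (auto simp: bring_two_forward_def bring_forward_def)

lemma permutes_bring_two_forward:
  assumes "i < j" "j \<le> k"
  shows "bring_two_forward i j permutes {..<Suc k}"
proof -
  have "bring_forward 1 (j - 1) permutes {..<Suc k}" "bring_forward 0 i permutes {..<Suc k}"
    using assms by (auto intro: permutes_subset[OF permutes_bring_forward])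
  then show ?thesis
    unfolding bring_two_forward_def by (rule permutes_compose)
qed

lemma permutation_bring_two_forward: "permutation (bring_two_forward i j)"
  unfolding bring_two_forward_def by (intro permutation_compose permutation_bring_forward)

lemma sign_bring_two_forward:
  assumes "i < j"
  shows "sign (bring_two_forward i j) = - ((-1) ^ (i + j))"
proof -
  obtain j' where "j = Suc j'"
    using assms by (cases j) auto
  then show ?thesis
    unfolding bring_two_forward_def
    by (simp add: sign_compose permutation_bring_forward sign_bring_forward power_add)
qed

lemma sign_bring_two_forward_swap:
  "i < j \<Longrightarrow> sign (bring_two_forward i j \<circ> transpose 0 1) = (-1) ^ (i + j)"
  unfolding sign_compose[OF permutation_bring_two_forward permutation_swap_id]
  by (simp add: sign_bring_two_forward sign_swap_id)

lemma strict_mono_on_bring_forward: "strict_mono_on {Suc a..} (bring_forward a i)"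
  by (rule strict_mono_onI) (auto simp: bring_forward_def)

lemma strict_mono_on_bring_two_forward: "strict_mono_on {2..} (bring_two_forward i j)"
proof (rule strict_mono_onI)
  fix r s :: nat
  assume "r \<in> {2..}" "s \<in> {2..}" "r < s"
  moreover have "bring_forward 1 (j - 1) p \<in> {1..}" if "p \<in> {2..}" for p
    using that by (auto simp: bring_forward_def)
  ultimately show "bring_two_forward i j r < bring_two_forward i j s"
    unfolding bring_two_forward_def o_def
    using strict_mono_on_bring_forward[of 0 i] strict_mono_on_bring_forward[of 1 "j - 1"]
    by (simp add: strict_mono_on_def numeral_2_eq_2)
qed

lemma mem_unshuffles_1_1:
  "0 < k \<Longrightarrow> \<sigma> \<in> unshuffles [1, 1, k - 1] \<longleftrightarrow>
     \<sigma> permutes {..<Suc k} \<and> strict_mono_on {2..<Suc k} \<sigma>"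
  by (auto simp: mem_unshuffles_three_blocks strict_mono_on_def numeral_2_eq_2)

lemma unshuffles_1_1_eqI:
  assumes "0 < k" "\<sigma> \<in> unshuffles [1, 1, k - 1]" "\<tau> \<in> unshuffles [1, 1, k - 1]"
    and "\<sigma> 0 = \<tau> 0" "\<sigma> 1 = \<tau> 1"
  shows "\<sigma> = \<tau>"
  using assms unfolding mem_unshuffles_1_1[OF \<open>0 < k\<close>]
  by (intro permutes_eq_if_strict_mono_on_block[of \<sigma> "{..<Suc k}" \<tau> 2 "Suc k"])
    (auto simp: numeral_2_eq_2 not_le less_Suc_eq)

lemma bring_two_forward_in_unshuffles:
  assumes "i < j" "j \<le> k"
  shows "bring_two_forward i j \<in> unshuffles [1, 1, k - 1]"
    and "bring_two_forward i j \<circ> transpose 0 1 \<in> unshuffles [1, 1, k - 1]"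
proof -
  have k: "0 < k"
    using assms by simp
  have perm: "bring_two_forward i j permutes {..<Suc k}"
    using assms by (rule permutes_bring_two_forward)
  have mono: "strict_mono_on {2..<Suc k} (bring_two_forward i j)"
    by (rule monotone_on_subset[OF strict_mono_on_bring_two_forward]) auto
  then show "bring_two_forward i j \<in> unshuffles [1, 1, k - 1]"
    using perm mem_unshuffles_1_1[OF k] by blast
  have "transpose 0 1 permutes {..<Suc k}"
    using k by (intro permutes_swap_id) auto
  then have "bring_two_forward i j \<circ> transpose 0 1 permutes {..<Suc k}"
    using perm by (rule permutes_compose)
  moreover have "strict_mono_on {2..<Suc k} (bring_two_forward i j \<circ> transpose 0 1)"
    using mono by (simp add: strict_mono_on_def transpose_def)
  ultimately show "bring_two_forward i j \<circ> transpose 0 1 \<in> unshuffles [1, 1, k - 1]"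
    using mem_unshuffles_1_1[OF k] by blast
qed

lemma unshuffles_1_1_cases:
  assumes k: "0 < k" and \<sigma>: "\<sigma> \<in> unshuffles [1, 1, k - 1]"
  obtains (ordered) i j where "i < j" "j \<le> k" "\<sigma> = bring_two_forward i j"
    | (swapped) i j where "i < j" "j \<le> k" "\<sigma> = bring_two_forward i j \<circ> transpose 0 1"
proof -
  have \<sigma>_perm: "\<sigma> permutes {..<Suc k}"
    using \<sigma> mem_unshuffles_1_1[OF k] by blast
  have "\<sigma> 0 \<noteq> \<sigma> 1"
    using permutes_inj[OF \<sigma>_perm] by (simp add: inj_eq)
  moreover have "\<sigma> 0 \<le> k" "\<sigma> 1 \<le> k"
    using permutes_in_image[OF \<sigma>_perm, of 0] permutes_in_image[OF \<sigma>_perm, of 1] k by simp_all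
  ultimately consider "\<sigma> 0 < \<sigma> 1" "\<sigma> 1 \<le> k" | "\<sigma> 1 < \<sigma> 0" "\<sigma> 0 \<le> k"
    by linarith
  then show ?thesis
  proof cases
    case 1
    have "\<sigma> = bring_two_forward (\<sigma> 0) (\<sigma> 1)"
      using 1 by (intro unshuffles_1_1_eqI[OF k \<sigma> bring_two_forward_in_unshuffles(1)])
        (simp_all add: bring_two_forward_apply)
    with 1 show ?thesis
      by (rule ordered)
  next
    case 2
    have "\<sigma> = bring_two_forward (\<sigma> 1) (\<sigma> 0) \<circ> transpose 0 1"
      using 2 by (intro unshuffles_1_1_eqI[OF k \<sigma> bring_two_forward_in_unshuffles(2)])
        (simp_all add: bring_two_forward_apply)
    with 2 show ?thesis
      by (rule swapped)
  qed
qed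

lemma sum_unshuffles_bring_two_forward:
  assumes k: "0 < k"
  shows "(\<Sum>\<sigma>\<in>unshuffles [1, 1, k - 1]. F \<sigma>) =
    (\<Sum>j<Suc k. \<Sum>i<j. F (bring_two_forward i j) + F (bring_two_forward i j \<circ> transpose 0 1))"
proof -
  define S where "S = (SIGMA j:{..<Suc k}. {..<j}) \<times> (UNIV :: bool set)"
  define g where "g x = (case x of ((j, i), swap) \<Rightarrow>
    if swap then bring_two_forward i j \<circ> transpose 0 1 else bring_two_forward i j)" for x
  have g_01: "g ((j, i), swap) 0 = (if swap then j else i)" "g ((j, i), swap) 1 = (if swap then i else j)"
    if "i < j" for i j swap
    using that by (simp_all add: g_def bring_two_forward_apply)
  have "bij_betw g S (unshuffles [1, 1, k - 1])"
  proof (rule bij_betwI')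
    fix x y assume "x \<in> S" "y \<in> S"
    then obtain j i b j' i' b' where x: "x = ((j, i), b)" "i < j" and y: "y = ((j', i'), b')" "i' < j'"
      unfolding S_def by auto
    show "g x = g y \<longleftrightarrow> x = y"
    proof
      assume "g x = g y"
      then have "g x 0 = g y 0" "g x 1 = g y 1"
        by simp_all
      then show "x = y"
        unfolding x y g_01[OF x(2)] g_01[OF y(2)] using x(2) y(2) by (cases b; cases b') auto
    qed simp
  next
    fix x assume "x \<in> S"
    then show "g x \<in> unshuffles [1, 1, k - 1]"
      unfolding S_def g_def using bring_two_forward_in_unshuffles by auto
  next
    fix \<sigma> assume "\<sigma> \<in> unshuffles [1, 1, k - 1]"
    with k show "\<exists>x\<in>S. \<sigma> = g x"
    proof (cases rule: unshuffles_1_1_cases)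
      case (ordered i j)
      then show ?thesis
        by (intro bexI[of _ "((j, i), False)"]) (simp_all add: g_def S_def)
    next
      case (swapped i j)
      then show ?thesis
        by (intro bexI[of _ "((j, i), True)"]) (simp_all add: g_def S_def)
    qed
  qed
  then have "(\<Sum>\<sigma>\<in>unshuffles [1, 1, k - 1]. F \<sigma>) = (\<Sum>x\<in>S. F (g x))"
    by (rule sum.reindex_bij_betw[symmetric])
  also have "\<dots> = (\<Sum>(j, i)\<in>(SIGMA j:{..<Suc k}. {..<j}).
      F (bring_two_forward i j) + F (bring_two_forward i j \<circ> transpose 0 1))"
    unfolding S_def sum.cartesian_product' UNIV_bool by (intro sum.cong) (auto simp: g_def)
  also have "\<dots> = (\<Sum>j<Suc k. \<Sum>i<j. F (bring_two_forward i j) + F (bring_two_forward i j \<circ> transpose 0 1))"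
    by (rule sum.Sigma[symmetric]) auto
  finally show ?thesis .
qed

section \<open>Signed sums over unshuffles\<close>

lemma length_seg [simp]: "length (seg us \<sigma> a b) = b - a"
  by (simp add: seg_def)

lemma nth_seg [simp]: "p < b - a \<Longrightarrow> seg us \<sigma> a b ! p = us ! \<sigma> (a + p)"
  by (simp add: seg_def)

lemma seg_comp_fixing:
  "(\<And>p. a \<le> p \<Longrightarrow> p < b \<Longrightarrow> \<tau> p = p) \<Longrightarrow> seg us (\<sigma> \<circ> \<tau>) a b = seg us \<sigma> a b"
  unfolding seg_def by (rule map_cong) auto

lemma length_del [simp]: "i < length xs \<Longrightarrow> length (del i xs) = length xs - 1"
  by (auto simp: del_def)

lemma nth_del:
  "i < length xs \<Longrightarrow> p < length xs - 1 \<Longrightarrow> del i xs ! p = xs ! (if p < i then p else Suc p)"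
  by (auto simp: del_def nth_append min_def)

lemma seg_send_back:
  "length us = Suc k \<Longrightarrow> i \<le> k \<Longrightarrow> seg us (send_back i (k - i)) 0 k = del i us"
  by (rule nth_equalityI) (auto simp: nth_del send_back_apply)

lemma seg_bring_forward:
  "length us = Suc k \<Longrightarrow> i \<le> k \<Longrightarrow> seg us (bring_forward 0 i) 1 (Suc k) = del i us"
  by (rule nth_equalityI) (auto simp: nth_del bring_forward_0_apply)

lemma seg_bring_two_forward:
  assumes "length us = Suc k" "i < j" "j \<le> k"
  shows "seg us (bring_two_forward i j) 2 (Suc k) = del i (del j us)"
proof (rule nth_equalityI)
  fix p assume "p < length (seg us (bring_two_forward i j) 2 (Suc k))"
  then have p: "p < k - 1"
    by simp
  have "del i (del j us) ! p =
      us ! (if p < i then p else if Suc p < j then Suc p else Suc (Suc p))"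
    using assms p by (simp add: nth_del)
  also have "\<dots> = us ! bring_two_forward i j (2 + p)"
    using assms(2) by (simp add: bring_two_forward_apply)
  finally show "seg us (bring_two_forward i j) 2 (Suc k) ! p = del i (del j us) ! p"
    using p by simp
qed (use assms in simp)

context vector_space
begin

lemma signed_sum_unshuffles_last_singleton:
  assumes "length us = Suc k"
  shows "scale ((-1) ^ k)
           (\<Sum>\<sigma>\<in>unshuffles [k, 1, 0]. scale (of_int (sign \<sigma>)) (G (seg us \<sigma> 0 k) (us ! \<sigma> k)))
       = (\<Sum>i<Suc k. scale ((-1) ^ i) (G (del i us) (us ! i)))"
proof -
  have "(-1) ^ k * (-1) ^ (k - i) = ((-1) ^ i :: 'a)" if "i \<le> k" for i
    using that by (metis le_add_diff_inverse left_minus_one_mult_self mult.commute power_add)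
  then show ?thesis
    unfolding sum_unshuffles_send_back scale_sum_right
    using assms by (intro sum.cong) (simp_all add: sign_send_back seg_send_back send_back_apply)
qed

lemma signed_sum_unshuffles_first_singleton:
  assumes "length us = Suc k"
  shows "(\<Sum>\<sigma>\<in>unshuffles [1, k]. scale (of_int (sign \<sigma>)) (G (us ! \<sigma> 0) (seg us \<sigma> 1 (Suc k))))
       = (\<Sum>i<Suc k. scale ((-1) ^ i) (G (us ! i) (del i us)))"
  unfolding sum_unshuffles_bring_forward using assms
  by (intro sum.cong)
    (simp_all add: sign_bring_forward seg_bring_forward[unfolded One_nat_def] bring_forward_0_apply)

lemma signed_sum_unshuffles_first_pair:
  assumes "length us = Suc k" "0 < k"
  shows "(\<Sum>\<sigma>\<in>unshuffles [1, 1, k - 1].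
            scale (of_int (sign \<sigma>)) (G (us ! \<sigma> 0) (us ! \<sigma> 1) (seg us \<sigma> 2 (Suc k))))
       = (\<Sum>j<Suc k. \<Sum>i<j. scale ((-1) ^ (i + j))
            (G (us ! j) (us ! i) (del i (del j us)) - G (us ! i) (us ! j) (del i (del j us))))"
  unfolding sum_unshuffles_bring_two_forward[OF assms(2)]
proof (intro sum.cong refl)
  fix j i assume "j \<in> {..<Suc k}" "i \<in> {..<j}"
  then have ij: "i < j" "j \<le> k"
    by auto
  let ?\<sigma> = "bring_two_forward i j" and ?\<tau> = "bring_two_forward i j \<circ> transpose 0 1"
    and ?R = "del i (del j us)"
  have \<tau>_apply: "?\<tau> 0 = j" "?\<tau> 1 = i"
    using ij by (simp_all add: bring_two_forward_apply)
  have "seg us ?\<tau> 2 (Suc k) = seg us ?\<sigma> 2 (Suc k)"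
    by (rule seg_comp_fixing) simp
  then show "scale (of_int (sign ?\<sigma>)) (G (us ! ?\<sigma> 0) (us ! ?\<sigma> 1) (seg us ?\<sigma> 2 (Suc k)))
      + scale (of_int (sign ?\<tau>)) (G (us ! ?\<tau> 0) (us ! ?\<tau> 1) (seg us ?\<tau> 2 (Suc k)))
    = scale ((-1) ^ (i + j)) (G (us ! j) (us ! i) ?R - G (us ! i) (us ! j) ?R)"
    unfolding \<tau>_apply seg_bring_two_forward[OF assms(1) ij]
      sign_bring_two_forward[OF ij(1)] sign_bring_two_forward_swap[OF ij(1)]
    using ij by (simp add: bring_two_forward_apply scale_right_diff_distrib)
qed

end

lemma alt_cochain_diff_first:
  assumes "alt_cochain scv scg (Suc n) f" "length vs = n"
  shows "f ((x - y) # vs) = f (x # vs) - f (y # vs)"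
proof -
  have "Vector_Spaces.linear scv scg (\<lambda>z. f ((x # vs)[0 := z]))"
    using assms(1) unfolding alt_cochain_def
    by (elim conjE allE[of _ "x # vs"] allE[of _ 0]) (simp add: assms(2))
  then interpret linear scv scg "\<lambda>z. f (z # vs)"
    by simp
  show ?thesis
    by (rule diff)
qed

lemma (in vector_space) signed_sum_unshuffles_T_bracket:
  assumes "alt_cochain scv scale k f" "length us = Suc k"
  shows "(if k = 0 then 0 else \<Sum>\<sigma>\<in>unshuffles [1, 1, k - 1].
            scale (of_int (sign \<sigma>)) (f (rho (T (us ! \<sigma> 0)) (us ! \<sigma> 1) # seg us \<sigma> 2 (Suc k))))
       = - (\<Sum>j<Suc k. \<Sum>i<j.
              scale ((-1) ^ (i + j)) (f (T_bracket rho T (us ! i) (us ! j) # del i (del j us))))"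
    (is "?lhs = - ?rhs")
proof (cases k)
  case (Suc n)
  then have "?lhs = (\<Sum>j<Suc k. \<Sum>i<j. scale ((-1) ^ (i + j))
      (f (rho (T (us ! j)) (us ! i) # del i (del j us)) - f (rho (T (us ! i)) (us ! j) # del i (del j us))))"
    using signed_sum_unshuffles_first_pair[OF assms(2)] by simp
  also have "\<dots> = - ?rhs"
    unfolding T_bracket_def sum_negf[symmetric] using assms Suc
    by (intro sum.cong refl) (simp add: alt_cochain_diff_first scale_right_diff_distrib)
  finally show ?thesis .
qed simp

theorem proposition3p3:
  fixes scg :: "'k::field \<Rightarrow> 'g::ab_group_add \<Rightarrow> 'g"
    and br :: "'g \<Rightarrow> 'g \<Rightarrow> 'g"
    and scv :: "'k \<Rightarrow> 'v::ab_group_add \<Rightarrow> 'v"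
    and rho :: "'g \<Rightarrow> 'v \<Rightarrow> 'v"
    and T :: "'v \<Rightarrow> 'g"
    and k :: nat
    and f :: "'v list \<Rightarrow> 'g"
    and us :: "'v list"
  assumes "lie_algebra scg br"
    and "lie_representation scg br scv rho"
    and "O_operator scg br scv rho T"
    and "alt_cochain scv scg k f"
    and "length us = Suc k"
  shows "d_bar scg br rho T k f us
         = scg ((-1) ^ k) (bbracket scg br rho 1 (\<lambda>vs. T (vs ! 0)) k f us)"
proof -
  interpret vector_space scg
    using assms(1) by (simp add: lie_algebra_def)
  define X1 where "X1 = (\<Sum>\<sigma>\<in>unshuffles [k, 1, 0].
    scg (of_int (sign \<sigma>)) (T (rho (f (seg us \<sigma> 0 k)) (us ! \<sigma> k))))"
  define X2 where "X2 = (if k = 0 then 0 else \<Sum>\<sigma>\<in>unshuffles [1, 1, k - 1].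
    scg (of_int (sign \<sigma>)) (f (rho (T (us ! \<sigma> 0)) (us ! \<sigma> 1) # seg us \<sigma> 2 (Suc k))))"
  define X3 where "X3 = (\<Sum>\<sigma>\<in>unshuffles [1, k].
    scg (of_int (sign \<sigma>)) (br (T (us ! \<sigma> 0)) (f (seg us \<sigma> 1 (Suc k)))))"
  have "bbracket scg br rho 1 (\<lambda>vs. T (vs ! 0)) k f us = X1 - scg ((-1) ^ k) X2 + scg ((-1) ^ k) X3"
    unfolding bbracket_def X1_def X2_def X3_def by (simp add: numeral_2_eq_2)
  moreover have "scg ((-1) ^ k) X1 = (\<Sum>i<Suc k. scg ((-1) ^ i) (T (rho (f (del i us)) (us ! i))))"
    unfolding X1_def by (rule signed_sum_unshuffles_last_singleton[OF assms(5)])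
  moreover have "X2 = - (\<Sum>j<Suc k. \<Sum>i<j. scg ((-1) ^ (i + j))
      (f (T_bracket rho T (us ! i) (us ! j) # del i (del j us))))"
    unfolding X2_def by (rule signed_sum_unshuffles_T_bracket[OF assms(4,5)])
  moreover have "X3 = (\<Sum>i<Suc k. scg ((-1) ^ i) (br (T (us ! i)) (f (del i us))))"
    unfolding X3_def by (rule signed_sum_unshuffles_first_singleton[OF assms(5)])
  ultimately show ?thesis
    unfolding d_bar_def by (simp add: scale_right_distrib scale_right_diff_distrib algebra_simps)
qed

end
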